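(* Assume the monotone likelihood ratio property: for all $\rho,\rho'\in\mathcal{R}$ with $\rho>\rho'$, $\frac{\Pr\{R=\rho\mid Y=1\}}{\Pr\{R=\rho\mid Y=0\}}\ge\frac{\Pr\{R=\rho'\mid Y=1\}}{\Pr\{R=\rho'\mid Y=0\}}$. Let $\epsilon_{\max}\ge0$, $\gamma_{\max}\ge 0$, and let $\epsilon^*$ be the solution of $$\epsilon^*=\arg\max_{0\le\epsilon\le\epsilon_{\max}}\theta(\epsilon)\quad\text{s.t.}\quad|\gamma(\epsilon)|\le\gamma_{\max}.$$ Then $\epsilon^*=\epsilon_{\max}$ if $|\gamma(\epsilon_{\max})|\le\gamma_{\max}$, and otherwise $\epsilon^*=\max\{\epsilon\le\epsilon_{\max}:\ |\gamma(\epsilon)|=\gamma_{\max}\}$.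
   Context: There are $n$ individuals indexed by $\mathcal{N}=\{1,\dots,n\}$. Individual $i$ is described by a random tuple $(X_i,A_i,Y_i)$, with features $X_i\in\mathcal{X}$, protected attribute $A_i\in\{0,1\}$ and qualification state $Y_i\in\{0,1\}$; the tuples are i.i.d. with a common distribution $\mathsf{F}$, and $(X,A,Y)$ is a generic tuple with this distribution. A fixed function $r:\mathcal{X}\to\mathcal{R}$ is given, with $\mathcal{R}\subset[0,1]$ finite; $R_i=r(X_i)$, $R=r(X)$, $\mathbf{D}=(X_1,\dots,X_n)$. For $\epsilon\ge0$, the exponential mechanism $\mathscr{A}_\epsilon$ selects individual $i$ with probability $Z_{i,\epsilon}=\exp(\epsilon R_i/2)/\sum_{j=1}^n\exp(\epsilon R_j/2)$ given the scores; $\mathscr{A}_\epsilon(\mathbf{D})$ denotes the selected index. Its accuracy is $\theta(\epsilon)=\Pr\{Y_{\mathscr{A}_\epsilon(\mathbf{D})}=1\}$ and its fairness gap is $\gamma(\epsilon)=E\{Z_{i,\epsilon}\mid A_i=0,Y_i=1\}-E\{Z_{i,\epsilon}\mid A_i=1,Y_i=1\}$ (conditioning events assumed to have positive probability). *)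

theory Defs
  imports "HOL-Probability.Probability"
begin

text \<open>Individuals are indexed by {1..n}. Individual i has features X i, protected
attribute A i (False = 0, True = 1) and qualification Y i (False = 0, True = 1),
all random variables on the probability space P.\<close>

definition sel_prob ::
  "('x \<Rightarrow> real) \<Rightarrow> (nat \<Rightarrow> 'w \<Rightarrow> 'x) \<Rightarrow> nat \<Rightarrow> real \<Rightarrow> nat \<Rightarrow> 'w \<Rightarrow> real" where
  "sel_prob r X n \<epsilon> i \<omega> =
     exp (\<epsilon> * r (X i \<omega>) / 2) / (\<Sum>j\<in>{1..n}. exp (\<epsilon> * r (X j \<omega>) / 2))"

text \<open>Accuracy: probability that the selected individual is qualified
(the mechanism's internal randomness integrated out).\<close>
definition accuracy ::
  "'w measure \<Rightarrow> ('x \<Rightarrow> real) \<Rightarrow> (nat \<Rightarrow> 'w \<Rightarrow> 'x) \<Rightarrow> (nat \<Rightarrow> 'w \<Rightarrow> bool)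
    \<Rightarrow> nat \<Rightarrow> real \<Rightarrow> real" where
  "accuracy P r X Y n \<epsilon> =
     (\<integral>\<omega>. (\<Sum>i\<in>{1..n}. sel_prob r X n \<epsilon> i \<omega> * (if Y i \<omega> then 1 else 0)) \<partial>P)"

definition cond_exp :: "'w measure \<Rightarrow> ('w \<Rightarrow> real) \<Rightarrow> ('w \<Rightarrow> bool) \<Rightarrow> real" where
  "cond_exp P Z B = (\<integral>\<omega>. Z \<omega> * indicator {\<omega>\<in>space P. B \<omega>} \<omega> \<partial>P)
                     / measure P {\<omega>\<in>space P. B \<omega>}"

text \<open>Fairness gap, computed for individual 1 (the same for every i by exchangeability).\<close>
definition fairness_gap ::
  "'w measure \<Rightarrow> ('x \<Rightarrow> real) \<Rightarrow> (nat \<Rightarrow> 'w \<Rightarrow> 'x) \<Rightarrow> (nat \<Rightarrow> 'w \<Rightarrow> bool)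
    \<Rightarrow> (nat \<Rightarrow> 'w \<Rightarrow> bool) \<Rightarrow> nat \<Rightarrow> real \<Rightarrow> real" where
  "fairness_gap P r X A Y n \<epsilon> =
     cond_exp P (sel_prob r X n \<epsilon> 1) (\<lambda>\<omega>. \<not> A 1 \<omega> \<and> Y 1 \<omega>)
   - cond_exp P (sel_prob r X n \<epsilon> 1) (\<lambda>\<omega>. A 1 \<omega> \<and> Y 1 \<omega>)"

text \<open>Pr{R = rho | Y = b} under the common distribution F of a generic tuple (X,A,Y).\<close>
definition prob_R_given_Y ::
  "('x \<times> bool \<times> bool) measure \<Rightarrow> ('x \<Rightarrow> real) \<Rightarrow> real \<Rightarrow> bool \<Rightarrow> real" where
  "prob_R_given_Y F r \<rho> b =
     measure F {t \<in> space F. r (fst t) = \<rho> \<and> snd (snd t) = b}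
     / measure F {t \<in> space F. snd (snd t) = b}"

end

theory Submission
  imports Defs
begin

(* Accuracy is nondecreasing in \<epsilon>. By independence and identical distribution, it is an
   average over score profiles \<rho> \<in> RR^n, with weights \<Prod>j Pr{R = \<rho> j}, of the mean
   \<Sum>i Z_i(\<epsilon>, \<rho>) q(\<rho> i) of the qualification rates q(\<rho>) = Pr{Y = 1 | R = \<rho>} under the
   exponential-mechanism weights. The MLR property makes q nondecreasing in the score, and passing
   from \<epsilon> to \<epsilon>' > \<epsilon> reweights by exp((\<epsilon>' - \<epsilon>) \<rho> i / 2), also nondecreasing in the score;
   by Chebyshev's sum inequality such a reweighting cannot lower the mean.
   The fairness gap is continuous in \<epsilon> and vanishes at \<epsilon> = 0. So either \<epsilon>max itself is
   feasible, or, by the intermediate value theorem, every feasible \<epsilon> lies below the largest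
   solution of |\<gamma>(\<epsilon>)| = \<gamma>max in [0, \<epsilon>max] (attained by compactness); monotonicity of the
   accuracy then makes the largest feasible \<epsilon> optimal. *)

lemma Chebyshev_weighted_mean_le:
  fixes a c v :: "'i \<Rightarrow> real"
  assumes "finite I" "I \<noteq> {}" "\<And>i. i \<in> I \<Longrightarrow> a i > 0" "\<And>i. i \<in> I \<Longrightarrow> c i > 0"
    and similarly_ordered: "\<And>i j. i \<in> I \<Longrightarrow> j \<in> I \<Longrightarrow> (c i - c j) * (v i - v j) \<ge> 0"
  shows "(\<Sum>i\<in>I. a i * v i) / (\<Sum>i\<in>I. a i) \<le> (\<Sum>i\<in>I. a i * c i * v i) / (\<Sum>i\<in>I. a i * c i)"
proof -
  have pos: "(\<Sum>i\<in>I. a i) > 0" "(\<Sum>i\<in>I. a i * c i) > 0"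
    using assms by (auto intro!: sum_pos)
  define D where "D = (\<Sum>i\<in>I. \<Sum>j\<in>I. a i * a j * v i * (c i - c j))"
  have D_eq: "D = (\<Sum>i\<in>I. a i * c i * v i) * (\<Sum>i\<in>I. a i) - (\<Sum>i\<in>I. a i * v i) * (\<Sum>i\<in>I. a i * c i)"
    unfolding D_def by (simp add: sum_distrib_left sum_distrib_right algebra_simps sum_subtractf)
  have D_swap: "D = (\<Sum>i\<in>I. \<Sum>j\<in>I. a j * a i * v j * (c j - c i))"
    unfolding D_def by (rule sum.swap)
  have "2 * D = (\<Sum>i\<in>I. \<Sum>j\<in>I. a i * a j * v i * (c i - c j)) + (\<Sum>i\<in>I. \<Sum>j\<in>I. a j * a i * v j * (c j - c i))"
    using D_def D_swap by (metis mult_2)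
  also have "\<dots> = (\<Sum>i\<in>I. \<Sum>j\<in>I. a i * a j * ((c i - c j) * (v i - v j)))"
    unfolding sum.distrib[symmetric] by (intro sum.cong refl) (simp add: algebra_simps)
  also have "\<dots> \<ge> 0"
    using assms(3) similarly_ordered by (intro sum_nonneg) (metis less_imp_le mult_nonneg_nonneg)
  finally have "D \<ge> 0" by simp
  with pos show ?thesis
    by (simp add: D_eq divide_simps)
qed

definition exp_mech_prob :: "'i set \<Rightarrow> real \<Rightarrow> ('i \<Rightarrow> real) \<Rightarrow> 'i \<Rightarrow> real" where
  "exp_mech_prob I \<epsilon> \<rho> i = exp (\<epsilon> * \<rho> i / 2) / (\<Sum>j\<in>I. exp (\<epsilon> * \<rho> j / 2))"

lemma continuous_on_exp_mech_prob:
  assumes "finite I" "I \<noteq> {}"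
  shows "continuous_on S (\<lambda>\<epsilon>. exp_mech_prob I \<epsilon> \<rho> i)"
proof -
  have "(\<Sum>j\<in>I. exp (\<epsilon> * \<rho> j / 2)) \<noteq> 0" for \<epsilon>
    using sum_pos[OF assms, of "\<lambda>j. exp (\<epsilon> * \<rho> j / 2)"] by simp
  then show ?thesis
    unfolding exp_mech_prob_def by (intro continuous_intros) auto
qed

lemma mono_exp_mech_mean:
  fixes \<rho> v :: "'i \<Rightarrow> real"
  assumes "finite I" "I \<noteq> {}" and v_mono: "\<And>i j. i \<in> I \<Longrightarrow> j \<in> I \<Longrightarrow> \<rho> j < \<rho> i \<Longrightarrow> v j \<le> v i"
  shows "mono (\<lambda>\<epsilon>. \<Sum>i\<in>I. exp_mech_prob I \<epsilon> \<rho> i * v i)"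
proof (rule monoI)
  fix \<epsilon> \<epsilon>' :: real
  assume "\<epsilon> \<le> \<epsilon>'"
  define a where "a i = exp (\<epsilon> * \<rho> i / 2)" for i
  define c where "c i = exp ((\<epsilon>' - \<epsilon>) * \<rho> i / 2)" for i
  have ac: "exp (\<epsilon>' * \<rho> i / 2) = a i * c i" for i
    unfolding a_def c_def by (simp add: exp_add[symmetric] algebra_simps add_divide_distrib[symmetric])
  have c_mono: "c j \<le> c i" if "\<rho> j \<le> \<rho> i" for i j
    unfolding c_def using \<open>\<epsilon> \<le> \<epsilon>'\<close> that by (simp add: mult_left_mono divide_right_mono)
  have "(\<Sum>i\<in>I. a i * v i) / (\<Sum>i\<in>I. a i) \<le> (\<Sum>i\<in>I. a i * c i * v i) / (\<Sum>i\<in>I. a i * c i)"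
  proof (rule Chebyshev_weighted_mean_le)
    fix i j assume "i \<in> I" "j \<in> I"
    consider "\<rho> j < \<rho> i" | "\<rho> i = \<rho> j" | "\<rho> i < \<rho> j"
      by linarith
    then show "(c i - c j) * (v i - v j) \<ge> 0"
    proof cases
      case 1
      then show ?thesis
        using c_mono[of j i] v_mono[of i j] \<open>i \<in> I\<close> \<open>j \<in> I\<close> by (intro mult_nonneg_nonneg) auto
    next
      case 3
      then show ?thesis
        using c_mono[of i j] v_mono[of j i] \<open>i \<in> I\<close> \<open>j \<in> I\<close> by (intro mult_nonpos_nonpos) auto
    qed (simp add: c_def)
  qed (use assms in \<open>auto simp: a_def c_def\<close>)
  moreover have "(\<Sum>i\<in>I. exp_mech_prob I \<epsilon> \<rho> i * v i) = (\<Sum>i\<in>I. a i * v i) / (\<Sum>i\<in>I. a i)"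
    unfolding exp_mech_prob_def a_def by (simp add: sum_divide_distrib)
  moreover have "(\<Sum>i\<in>I. exp_mech_prob I \<epsilon>' \<rho> i * v i) = (\<Sum>i\<in>I. a i * c i * v i) / (\<Sum>i\<in>I. a i * c i)"
    unfolding exp_mech_prob_def ac by (simp add: sum_divide_distrib)
  ultimately show "(\<Sum>i\<in>I. exp_mech_prob I \<epsilon> \<rho> i * v i) \<le> (\<Sum>i\<in>I. exp_mech_prob I \<epsilon>' \<rho> i * v i)"
    by simp
qed

lemma greatest_level_point:
  fixes G :: "real \<Rightarrow> real"
  assumes G: "continuous_on {a..b} G" and "a \<le> b" "G a \<le> \<gamma>" "\<gamma> < G b"
  obtains s where "a \<le> s" "s \<le> b" "G s = \<gamma>" "\<And>x. a \<le> x \<Longrightarrow> x \<le> b \<Longrightarrow> G x \<le> \<gamma> \<Longrightarrow> x \<le> s"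
proof -
  define K where "K = {x\<in>{a..b}. G x = \<gamma>}"
  have "closed K"
    unfolding K_def by (rule continuous_closed_preimage_constant[OF G closed_atLeastAtMost])
  then have "compact K"
    unfolding compact_eq_bounded_closed K_def by (auto intro: bounded_subset[of "{a..b}"])
  moreover have "K \<noteq> {}"
    using IVT'[of G a \<gamma> b] assms unfolding K_def by (auto simp: less_imp_le)
  ultimately obtain s where s: "s \<in> K" and s_max: "\<And>x. x \<in> K \<Longrightarrow> x \<le> s"
    using compact_attains_sup by metis
  \<comment> \<open>beyond the last crossing of the level \<gamma>, G stays above it, since G b > \<gamma>\<close>
  have "x \<le> s" if x: "a \<le> x" "x \<le> b" "G x \<le> \<gamma>" for x
  proof -
    have "continuous_on {x..b} G"
      using G by (rule continuous_on_subset) (use x in auto)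
    then obtain y where "x \<le> y" "y \<le> b" "G y = \<gamma>"
      using IVT'[of G x \<gamma> b] x \<open>\<gamma> < G b\<close> by (auto simp: less_imp_le)
    then show "x \<le> s"
      using s_max[of y] x unfolding K_def by auto
  qed
  with s that show ?thesis
    unfolding K_def by auto
qed

lemma is_arg_max_greatest_of_mono_on:
  fixes f :: "'a::order \<Rightarrow> 'b::linorder"
  assumes "mono_on {x. P x} f" "P s" "\<And>x. P x \<Longrightarrow> x \<le> s"
  shows "is_arg_max f P s"
  using assms by (auto simp: is_arg_max_linorder mono_on_def)

lemma constrained_arg_max_of_mono:
  fixes \<theta> G :: "real \<Rightarrow> real"
  assumes mono: "mono_on {0..\<epsilon>max} \<theta>" and G: "continuous_on {0..\<epsilon>max} G"
    and "G 0 \<le> \<gamma>max" "0 \<le> \<epsilon>max"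
  shows "(G \<epsilon>max \<le> \<gamma>max \<longrightarrow> is_arg_max \<theta> (\<lambda>\<epsilon>. 0 \<le> \<epsilon> \<and> \<epsilon> \<le> \<epsilon>max \<and> G \<epsilon> \<le> \<gamma>max) \<epsilon>max)
       \<and> (G \<epsilon>max > \<gamma>max \<longrightarrow>
            (\<exists>\<epsilon>s. (0 \<le> \<epsilon>s \<and> \<epsilon>s \<le> \<epsilon>max \<and> G \<epsilon>s = \<gamma>max)
               \<and> (\<forall>\<epsilon>. 0 \<le> \<epsilon> \<and> \<epsilon> \<le> \<epsilon>max \<and> G \<epsilon> = \<gamma>max \<longrightarrow> \<epsilon> \<le> \<epsilon>s)
               \<and> is_arg_max \<theta> (\<lambda>\<epsilon>. 0 \<le> \<epsilon> \<and> \<epsilon> \<le> \<epsilon>max \<and> G \<epsilon> \<le> \<gamma>max) \<epsilon>s))"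
proof (intro conjI impI)
  have mono': "mono_on {\<epsilon>. 0 \<le> \<epsilon> \<and> \<epsilon> \<le> \<epsilon>max \<and> G \<epsilon> \<le> \<gamma>max} \<theta>"
    by (rule mono_on_subset[OF mono]) auto
  show "is_arg_max \<theta> (\<lambda>\<epsilon>. 0 \<le> \<epsilon> \<and> \<epsilon> \<le> \<epsilon>max \<and> G \<epsilon> \<le> \<gamma>max) \<epsilon>max" if "G \<epsilon>max \<le> \<gamma>max"
    using that assms by (intro is_arg_max_greatest_of_mono_on[OF mono']) auto
  assume "G \<epsilon>max > \<gamma>max"
  then obtain s where "0 \<le> s" "s \<le> \<epsilon>max" "G s = \<gamma>max"
    and s_max: "\<And>x. 0 \<le> x \<Longrightarrow> x \<le> \<epsilon>max \<Longrightarrow> G x \<le> \<gamma>max \<Longrightarrow> x \<le> s"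
    using greatest_level_point[OF G] assms by metis
  then show "\<exists>\<epsilon>s. (0 \<le> \<epsilon>s \<and> \<epsilon>s \<le> \<epsilon>max \<and> G \<epsilon>s = \<gamma>max)
               \<and> (\<forall>\<epsilon>. 0 \<le> \<epsilon> \<and> \<epsilon> \<le> \<epsilon>max \<and> G \<epsilon> = \<gamma>max \<longrightarrow> \<epsilon> \<le> \<epsilon>s)
               \<and> is_arg_max \<theta> (\<lambda>\<epsilon>. 0 \<le> \<epsilon> \<and> \<epsilon> \<le> \<epsilon>max \<and> G \<epsilon> \<le> \<gamma>max) \<epsilon>s"
    by (intro exI[of _ s] conjI allI impI is_arg_max_greatest_of_mono_on[OF mono']) auto
qed

lemma (in finite_measure) has_bochner_integral_finite_range_indicator:
  fixes h :: "'v \<Rightarrow> real"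
  assumes "finite S" "\<And>\<omega>. \<omega> \<in> space M \<Longrightarrow> V \<omega> \<in> S"
    and level_sets: "\<And>v. v \<in> S \<Longrightarrow> {\<omega>\<in>space M. V \<omega> = v \<and> B \<omega>} \<in> sets M"
  shows "has_bochner_integral M (\<lambda>\<omega>. h (V \<omega>) * indicator {\<omega>\<in>space M. B \<omega>} \<omega>)
           (\<Sum>v\<in>S. h v * measure M {\<omega>\<in>space M. V \<omega> = v \<and> B \<omega>})"
proof -
  have "has_bochner_integral M (\<lambda>\<omega>. \<Sum>v\<in>S. h v * indicator {\<omega>\<in>space M. V \<omega> = v \<and> B \<omega>} \<omega>)
          (\<Sum>v\<in>S. h v * measure M {\<omega>\<in>space M. V \<omega> = v \<and> B \<omega>})"
    using level_sets by (intro has_bochner_integral_sum has_bochner_integral_mult_right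
        has_bochner_integral_real_indicator) (auto simp: less_top[symmetric])
  moreover have "h (V \<omega>) * indicator {\<omega>\<in>space M. B \<omega>} \<omega>
      = (\<Sum>v\<in>S. h v * indicator {\<omega>\<in>space M. V \<omega> = v \<and> B \<omega>} \<omega>)" if "\<omega> \<in> space M" for \<omega>
  proof -
    have "(\<Sum>v\<in>S. h v * indicator {\<omega>\<in>space M. V \<omega> = v \<and> B \<omega>} \<omega>)
        = (\<Sum>v\<in>S. if v = V \<omega> then h (V \<omega>) * indicator {\<omega>\<in>space M. B \<omega>} \<omega> else 0)"
      using that by (intro sum.cong) (auto simp: indicator_def)
    also have "\<dots> = h (V \<omega>) * indicator {\<omega>\<in>space M. B \<omega>} \<omega>"
      using assms(1,2) that by simp
    finally show ?thesis ..
  qed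
  ultimately show ?thesis
    by (subst has_bochner_integral_cong[OF refl _ refl]) auto
qed

locale iid_selection = prob_space P
  for P :: "'w measure" and MX :: "'x measure" and F :: "('x \<times> bool \<times> bool) measure"
    and X :: "nat \<Rightarrow> 'w \<Rightarrow> 'x" and A Y :: "nat \<Rightarrow> 'w \<Rightarrow> bool"
    and r :: "'x \<Rightarrow> real" and RR :: "real set" and n :: nat +
  assumes n_pos: "n \<ge> 1"
    and finite_RR: "finite RR" and r_in_RR: "\<And>x. r x \<in> RR"
    and r_measurable [measurable]: "r \<in> borel_measurable MX"
    and indep: "indep_vars (\<lambda>_. MX \<Otimes>\<^sub>M count_space UNIV \<Otimes>\<^sub>M count_space UNIV)
                  (\<lambda>i \<omega>. (X i \<omega>, A i \<omega>, Y i \<omega>)) {1..n}"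
    and ident: "\<And>i. i \<in> {1..n} \<Longrightarrow>
                  distr P (MX \<Otimes>\<^sub>M count_space UNIV \<Otimes>\<^sub>M count_space UNIV)
                    (\<lambda>\<omega>. (X i \<omega>, A i \<omega>, Y i \<omega>)) = F"
begin

abbreviation tuple_space :: "('x \<times> bool \<times> bool) measure" where
  "tuple_space \<equiv> MX \<Otimes>\<^sub>M count_space UNIV \<Otimes>\<^sub>M count_space UNIV"

abbreviation tuple :: "nat \<Rightarrow> 'w \<Rightarrow> 'x \<times> bool \<times> bool" where
  "tuple i \<omega> \<equiv> (X i \<omega>, A i \<omega>, Y i \<omega>)"

definition score_profile :: "'w \<Rightarrow> nat \<Rightarrow> real" where
  "score_profile \<omega> = restrict (\<lambda>i. r (X i \<omega>)) {1..n}"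

definition score_mass :: "real \<Rightarrow> real" where
  "score_mass \<rho> = measure F {t \<in> space F. r (fst t) = \<rho>}"

definition score_attr_mass :: "(bool \<Rightarrow> bool \<Rightarrow> bool) \<Rightarrow> real \<Rightarrow> real" where
  "score_attr_mass Q \<rho> = measure F {t \<in> space F. r (fst t) = \<rho> \<and> Q (fst (snd t)) (snd (snd t))}"

text \<open>\<open>Pr{Y = 1 | R = \<rho>}\<close>, with the junk value 0 when \<open>\<rho>\<close> has probability 0.\<close>
definition qualification_rate :: "real \<Rightarrow> real" where
  "qualification_rate \<rho> = score_attr_mass (\<lambda>_ y. y) \<rho> / score_mass \<rho>"

lemma one_in_indices: "1 \<in> {1..n}"
  using n_pos by simp

lemma measurable_tuple: "i \<in> {1..n} \<Longrightarrow> tuple i \<in> measurable P tuple_space"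
  using indep unfolding indep_vars_def2 by auto

lemma space_F: "space F = space tuple_space"
  using ident[OF one_in_indices] by (metis space_distr)

lemma sets_F: "sets F = sets tuple_space"
  using ident[OF one_in_indices] by (metis sets_distr)

lemma prob_space_F: "prob_space F"
  using ident[OF one_in_indices] prob_space_distr[OF measurable_tuple[OF one_in_indices]] by simp

lemma prob_tuple_vimage:
  "i \<in> {1..n} \<Longrightarrow> E \<in> sets tuple_space \<Longrightarrow> prob (tuple i -` E \<inter> space P) = measure F E"
  using measure_distr[OF measurable_tuple] ident by simp

lemma prob_INT_tuple_vimage:
  assumes "\<And>i. i \<in> {1..n} \<Longrightarrow> E i \<in> sets tuple_space"
  shows "prob (\<Inter>i\<in>{1..n}. tuple i -` E i \<inter> space P) = (\<Prod>i\<in>{1..n}. measure F (E i))"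
proof -
  have "indep_sets (\<lambda>i. {tuple i -` E \<inter> space P | E. E \<in> sets tuple_space}) {1..n}"
    using indep unfolding indep_vars_def2 by auto
  then have "prob (\<Inter>i\<in>{1..n}. tuple i -` E i \<inter> space P) = (\<Prod>i\<in>{1..n}. prob (tuple i -` E i \<inter> space P))"
    using n_pos assms by (intro indep_setsD) auto
  also have "\<dots> = (\<Prod>i\<in>{1..n}. measure F (E i))"
    using assms by (intro prod.cong refl prob_tuple_vimage)
  finally show ?thesis .
qed

lemma prob_attributes:
  assumes "i \<in> {1..n}"
  shows "prob {\<omega>\<in>space P. Q (A i \<omega>) (Y i \<omega>)} = measure F {t\<in>space F. Q (fst (snd t)) (snd (snd t))}"
proof -
  have E: "{t\<in>space tuple_space. Q (fst (snd t)) (snd (snd t))} \<in> sets tuple_space"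
    by measurable
  have "{\<omega>\<in>space P. Q (A i \<omega>) (Y i \<omega>)} = tuple i -` {t\<in>space tuple_space. Q (fst (snd t)) (snd (snd t))} \<inter> space P"
    using measurable_space[OF measurable_tuple[OF assms]] by auto
  then show ?thesis
    by (simp only: prob_tuple_vimage[OF assms E] space_F)
qed

lemma score_profile_in_PiE: "score_profile \<omega> \<in> PiE {1..n} (\<lambda>_. RR)"
  by (simp add: score_profile_def r_in_RR)

lemma score_profile_event_eq_INT:
  assumes "\<rho> \<in> extensional {1..n}" "i \<in> {1..n}"
  shows "{\<omega>\<in>space P. score_profile \<omega> = \<rho> \<and> Q (A i \<omega>) (Y i \<omega>)}
    = (\<Inter>j\<in>{1..n}. tuple j -` {t\<in>space tuple_space. r (fst t) = \<rho> j \<and> (j = i \<longrightarrow> Q (fst (snd t)) (snd (snd t)))} \<inter> space P)"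
  using assms measurable_space[OF measurable_tuple]
  by (auto simp: score_profile_def extensional_def restrict_def fun_eq_iff)

lemma score_profile_event_in_events:
  assumes "\<rho> \<in> extensional {1..n}" "i \<in> {1..n}"
  shows "{\<omega>\<in>space P. score_profile \<omega> = \<rho> \<and> Q (A i \<omega>) (Y i \<omega>)} \<in> events"
  unfolding score_profile_event_eq_INT[OF assms] using n_pos
  by (intro sets.finite_INT measurable_sets[OF measurable_tuple]) auto

lemma prob_score_profile_event:
  assumes "\<rho> \<in> extensional {1..n}" "i \<in> {1..n}"
  shows "prob {\<omega>\<in>space P. score_profile \<omega> = \<rho> \<and> Q (A i \<omega>) (Y i \<omega>)}
    = (\<Prod>j\<in>{1..n}. if j = i then score_attr_mass Q (\<rho> j) else score_mass (\<rho> j))"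
proof -
  have "prob {\<omega>\<in>space P. score_profile \<omega> = \<rho> \<and> Q (A i \<omega>) (Y i \<omega>)}
      = (\<Prod>j\<in>{1..n}. measure F {t\<in>space tuple_space. r (fst t) = \<rho> j \<and> (j = i \<longrightarrow> Q (fst (snd t)) (snd (snd t)))})"
    unfolding score_profile_event_eq_INT[OF assms] by (rule prob_INT_tuple_vimage) measurable
  also have "\<dots> = (\<Prod>j\<in>{1..n}. if j = i then score_attr_mass Q (\<rho> j) else score_mass (\<rho> j))"
    by (intro prod.cong refl) (simp add: score_attr_mass_def score_mass_def space_F)
  finally show ?thesis .
qed

lemma has_bochner_integral_score_profile:
  assumes "i \<in> {1..n}"
  shows "has_bochner_integral P (\<lambda>\<omega>. h (score_profile \<omega>) * indicator {\<omega>\<in>space P. Q (A i \<omega>) (Y i \<omega>)} \<omega>)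
    (\<Sum>\<rho>\<in>PiE {1..n} (\<lambda>_. RR). h \<rho> *
       (\<Prod>j\<in>{1..n}. if j = i then score_attr_mass Q (\<rho> j) else score_mass (\<rho> j)))"
proof -
  have "has_bochner_integral P (\<lambda>\<omega>. h (score_profile \<omega>) * indicator {\<omega>\<in>space P. Q (A i \<omega>) (Y i \<omega>)} \<omega>)
    (\<Sum>\<rho>\<in>PiE {1..n} (\<lambda>_. RR). h \<rho> * prob {\<omega>\<in>space P. score_profile \<omega> = \<rho> \<and> Q (A i \<omega>) (Y i \<omega>)})"
    using finite_RR score_profile_in_PiE score_profile_event_in_events assms
    by (intro has_bochner_integral_finite_range_indicator) (auto simp: finite_PiE PiE_iff)
  moreover have "(\<Sum>\<rho>\<in>PiE {1..n} (\<lambda>_. RR). h \<rho> * prob {\<omega>\<in>space P. score_profile \<omega> = \<rho> \<and> Q (A i \<omega>) (Y i \<omega>)})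
    = (\<Sum>\<rho>\<in>PiE {1..n} (\<lambda>_. RR). h \<rho> *
       (\<Prod>j\<in>{1..n}. if j = i then score_attr_mass Q (\<rho> j) else score_mass (\<rho> j)))"
    using assms by (intro sum.cong refl) (simp add: prob_score_profile_event PiE_iff)
  ultimately show ?thesis
    by simp
qed

lemma score_mass_nonneg: "score_mass \<rho> \<ge> 0"
  by (simp add: score_mass_def)

lemma score_mass_eq_qualified_plus_unqualified:
  "score_mass \<rho> = score_attr_mass (\<lambda>_ y. y) \<rho> + score_attr_mass (\<lambda>_ y. \<not> y) \<rho>"
proof -
  interpret F: prob_space F
    by (rule prob_space_F)
  have attr_sets: "{t\<in>space F. r (fst t) = \<rho> \<and> Q (fst (snd t)) (snd (snd t))} \<in> sets F" for Q
    unfolding sets_F space_F by measurable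
  have "{t\<in>space F. r (fst t) = \<rho>}
      = {t\<in>space F. r (fst t) = \<rho> \<and> snd (snd t)} \<union> {t\<in>space F. r (fst t) = \<rho> \<and> \<not> snd (snd t)}"
    by auto
  then show ?thesis
    unfolding score_mass_def score_attr_mass_def
    by (simp only:) (rule F.finite_measure_Union[OF attr_sets attr_sets], auto)
qed

lemma score_attr_mass_qualified_eq: "score_attr_mass (\<lambda>_ y. y) \<rho> = score_mass \<rho> * qualification_rate \<rho>"
proof -
  have "score_attr_mass (\<lambda>_ y. y) \<rho> \<ge> 0" "score_attr_mass (\<lambda>_ y. \<not> y) \<rho> \<ge> 0"
    by (simp_all add: score_attr_mass_def)
  then show ?thesis
    using score_mass_eq_qualified_plus_unqualified[of \<rho>]
    by (cases "score_mass \<rho> = 0") (auto simp: qualification_rate_def)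
qed

lemma qualification_rate_mono:
  assumes posY: "measure F {t \<in> space F. snd (snd t)} > 0" "measure F {t \<in> space F. \<not> snd (snd t)} > 0"
    and MLR: "prob_R_given_Y F r \<rho> True * prob_R_given_Y F r \<rho>' False
                \<ge> prob_R_given_Y F r \<rho>' True * prob_R_given_Y F r \<rho> False"
    and "score_mass \<rho> > 0" "score_mass \<rho>' > 0"
  shows "qualification_rate \<rho>' \<le> qualification_rate \<rho>"
proof -
  have "score_attr_mass (\<lambda>_ y. y) \<rho> * score_attr_mass (\<lambda>_ y. \<not> y) \<rho>'
      \<ge> score_attr_mass (\<lambda>_ y. y) \<rho>' * score_attr_mass (\<lambda>_ y. \<not> y) \<rho>"
    using MLR posY by (simp add: prob_R_given_Y_def score_attr_mass_def field_simps)
  then show ?thesis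
    using assms(4,5) unfolding qualification_rate_def score_mass_eq_qualified_plus_unqualified
    by (simp add: divide_simps algebra_simps)
qed

lemma sel_prob_eq_exp_mech_prob:
  "i \<in> {1..n} \<Longrightarrow> sel_prob r X n \<epsilon> i \<omega> = exp_mech_prob {1..n} \<epsilon> (score_profile \<omega>) i"
  by (simp add: sel_prob_def exp_mech_prob_def score_profile_def)

lemma accuracy_eq_sum_profiles:
  "accuracy P r X Y n \<epsilon> = (\<Sum>\<rho>\<in>PiE {1..n} (\<lambda>_. RR). (\<Prod>j\<in>{1..n}. score_mass (\<rho> j))
      * (\<Sum>i\<in>{1..n}. exp_mech_prob {1..n} \<epsilon> \<rho> i * qualification_rate (\<rho> i)))"
proof -
  have prod_eq: "(\<Prod>j\<in>{1..n}. if j = i then score_attr_mass (\<lambda>_ y. y) (\<rho> j) else score_mass (\<rho> j))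
      = (\<Prod>j\<in>{1..n}. score_mass (\<rho> j)) * qualification_rate (\<rho> i)" if "i \<in> {1..n}" for i \<rho>
  proof -
    have "(\<Prod>j\<in>{1..n}. if j = i then score_attr_mass (\<lambda>_ y. y) (\<rho> j) else score_mass (\<rho> j))
        = (\<Prod>j\<in>{1..n}. score_mass (\<rho> j) * (if j = i then qualification_rate (\<rho> j) else 1))"
      by (intro prod.cong refl) (simp add: score_attr_mass_qualified_eq)
    also have "\<dots> = (\<Prod>j\<in>{1..n}. score_mass (\<rho> j)) * qualification_rate (\<rho> i)"
      using that by (simp add: prod.distrib)
    finally show ?thesis .
  qed
  have "has_bochner_integral P
      (\<lambda>\<omega>. \<Sum>i\<in>{1..n}. exp_mech_prob {1..n} \<epsilon> (score_profile \<omega>) i * indicator {\<omega>\<in>space P. Y i \<omega>} \<omega>)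
      (\<Sum>i\<in>{1..n}. \<Sum>\<rho>\<in>PiE {1..n} (\<lambda>_. RR). exp_mech_prob {1..n} \<epsilon> \<rho> i
         * ((\<Prod>j\<in>{1..n}. score_mass (\<rho> j)) * qualification_rate (\<rho> i)))"
  proof (rule has_bochner_integral_sum)
    fix i assume i: "i \<in> {1..n}"
    show "has_bochner_integral P
        (\<lambda>\<omega>. exp_mech_prob {1..n} \<epsilon> (score_profile \<omega>) i * indicator {\<omega>\<in>space P. Y i \<omega>} \<omega>)
        (\<Sum>\<rho>\<in>PiE {1..n} (\<lambda>_. RR). exp_mech_prob {1..n} \<epsilon> \<rho> i
           * ((\<Prod>j\<in>{1..n}. score_mass (\<rho> j)) * qualification_rate (\<rho> i)))"
      using has_bochner_integral_score_profile[OF i, of "\<lambda>\<rho>. exp_mech_prob {1..n} \<epsilon> \<rho> i" "\<lambda>_ y. y"]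
      by (simp only: prod_eq[OF i])
  qed
  then have integral_eq:
    "(\<integral>\<omega>. (\<Sum>i\<in>{1..n}. exp_mech_prob {1..n} \<epsilon> (score_profile \<omega>) i * indicator {\<omega>\<in>space P. Y i \<omega>} \<omega>) \<partial>P)
    = (\<Sum>i\<in>{1..n}. \<Sum>\<rho>\<in>PiE {1..n} (\<lambda>_. RR). exp_mech_prob {1..n} \<epsilon> \<rho> i
         * ((\<Prod>j\<in>{1..n}. score_mass (\<rho> j)) * qualification_rate (\<rho> i)))"
    by (rule has_bochner_integral_integral_eq)
  have "accuracy P r X Y n \<epsilon> = (\<Sum>i\<in>{1..n}. \<Sum>\<rho>\<in>PiE {1..n} (\<lambda>_. RR). exp_mech_prob {1..n} \<epsilon> \<rho> i
         * ((\<Prod>j\<in>{1..n}. score_mass (\<rho> j)) * qualification_rate (\<rho> i)))"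
    unfolding accuracy_def integral_eq[symmetric]
    by (intro Bochner_Integration.integral_cong refl sum.cong) (simp add: sel_prob_eq_exp_mech_prob indicator_def)
  also have "\<dots> = (\<Sum>\<rho>\<in>PiE {1..n} (\<lambda>_. RR). (\<Prod>j\<in>{1..n}. score_mass (\<rho> j))
      * (\<Sum>i\<in>{1..n}. exp_mech_prob {1..n} \<epsilon> \<rho> i * qualification_rate (\<rho> i)))"
    by (subst sum.swap) (simp add: sum_distrib_left mult.left_commute)
  finally show ?thesis .
qed

lemma mono_accuracy:
  assumes posY: "measure F {t \<in> space F. snd (snd t)} > 0" "measure F {t \<in> space F. \<not> snd (snd t)} > 0"
    and MLR: "\<And>\<rho> \<rho>'. \<rho> \<in> RR \<Longrightarrow> \<rho>' \<in> RR \<Longrightarrow> \<rho> > \<rho>' \<Longrightarrow>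
                prob_R_given_Y F r \<rho> True * prob_R_given_Y F r \<rho>' False
                \<ge> prob_R_given_Y F r \<rho>' True * prob_R_given_Y F r \<rho> False"
  shows "mono (accuracy P r X Y n)"
proof (rule monoI)
  fix \<epsilon> \<epsilon>' :: real
  assume "\<epsilon> \<le> \<epsilon>'"
  show "accuracy P r X Y n \<epsilon> \<le> accuracy P r X Y n \<epsilon>'"
    unfolding accuracy_eq_sum_profiles
  proof (rule sum_mono)
    fix \<rho> assume \<rho>: "\<rho> \<in> PiE {1..n} (\<lambda>_. RR)"
    show "(\<Prod>j\<in>{1..n}. score_mass (\<rho> j)) * (\<Sum>i\<in>{1..n}. exp_mech_prob {1..n} \<epsilon> \<rho> i * qualification_rate (\<rho> i))
        \<le> (\<Prod>j\<in>{1..n}. score_mass (\<rho> j)) * (\<Sum>i\<in>{1..n}. exp_mech_prob {1..n} \<epsilon>' \<rho> i * qualification_rate (\<rho> i))"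
    proof (cases "\<forall>j\<in>{1..n}. score_mass (\<rho> j) > 0")
      case True
      have "mono (\<lambda>\<epsilon>. \<Sum>i\<in>{1..n}. exp_mech_prob {1..n} \<epsilon> \<rho> i * qualification_rate (\<rho> i))"
        using n_pos \<rho> True by (intro mono_exp_mech_mean qualification_rate_mono posY MLR) auto
      then show ?thesis
        using \<open>\<epsilon> \<le> \<epsilon>'\<close> by (intro mult_left_mono prod_nonneg score_mass_nonneg) (auto dest: monoD)
    next
      case False
      then obtain j where "j \<in> {1..n}" "\<not> score_mass (\<rho> j) > 0"
        by blast
      moreover from this have "score_mass (\<rho> j) = 0"
        using score_mass_nonneg[of "\<rho> j"] by linarith
      ultimately have "(\<Prod>j\<in>{1..n}. score_mass (\<rho> j)) = 0"
        by auto
      then show ?thesis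
        by (simp only: mult_zero_left order_refl)
    qed
  qed
qed

lemma continuous_on_cond_exp_sel_prob:
  assumes "i \<in> {1..n}"
  shows "continuous_on S (\<lambda>\<epsilon>. cond_exp P (sel_prob r X n \<epsilon> i) (\<lambda>\<omega>. Q (A i \<omega>) (Y i \<omega>)))"
proof -
  have integral_eq: "(\<integral>\<omega>. sel_prob r X n \<epsilon> i \<omega> * indicator {\<omega>\<in>space P. Q (A i \<omega>) (Y i \<omega>)} \<omega> \<partial>P)
    = (\<Sum>\<rho>\<in>PiE {1..n} (\<lambda>_. RR). exp_mech_prob {1..n} \<epsilon> \<rho> i *
       (\<Prod>j\<in>{1..n}. if j = i then score_attr_mass Q (\<rho> j) else score_mass (\<rho> j)))" for \<epsilon>
    using has_bochner_integral_integral_eq[OF has_bochner_integral_score_profile[OF assms]]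
    by (simp only: sel_prob_eq_exp_mech_prob[OF assms])
  show ?thesis
    unfolding cond_exp_def integral_eq divide_inverse using n_pos
    by (intro continuous_intros continuous_on_exp_mech_prob) auto
qed

lemma continuous_on_fairness_gap: "continuous_on S (fairness_gap P r X A Y n)"
  unfolding fairness_gap_def[abs_def]
  by (intro continuous_intros
      continuous_on_cond_exp_sel_prob[OF one_in_indices, of _ "\<lambda>a y. \<not> a \<and> y"]
      continuous_on_cond_exp_sel_prob[OF one_in_indices, of _ "\<lambda>a y. a \<and> y"])

lemma fairness_gap_0:
  assumes "measure F {t \<in> space F. \<not> fst (snd t) \<and> snd (snd t)} > 0"
    and "measure F {t \<in> space F. fst (snd t) \<and> snd (snd t)} > 0"
  shows "fairness_gap P r X A Y n 0 = 0"
proof -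
  have "cond_exp P (sel_prob r X n 0 1) (\<lambda>\<omega>. Q (A 1 \<omega>) (Y 1 \<omega>)) = 1 / n"
    if "measure F {t\<in>space F. Q (fst (snd t)) (snd (snd t))} > 0" for Q
  proof -
    have "prob {\<omega>\<in>space P. Q (A 1 \<omega>) (Y 1 \<omega>)} > 0"
      using that prob_attributes[OF one_in_indices] by simp
    then show ?thesis
      by (simp add: cond_exp_def sel_prob_def Int_absorb2)
  qed
  from this[of "\<lambda>a y. \<not> a \<and> y"] this[of "\<lambda>a y. a \<and> y"] assms show ?thesis
    by (simp add: fairness_gap_def)
qed

end

theorem corollary1:
  fixes P :: "'w measure" and MX :: "'x measure"
    and F :: "('x \<times> bool \<times> bool) measure"
    and X :: "nat \<Rightarrow> 'w \<Rightarrow> 'x" and A Y :: "nat \<Rightarrow> 'w \<Rightarrow> bool"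
    and r :: "'x \<Rightarrow> real" and RR :: "real set" and n :: nat
    and \<epsilon>max \<gamma>max :: real
  assumes P: "prob_space P"
    and n: "n \<ge> 1"
    and RR: "finite RR" "RR \<subseteq> {0..1}" "\<And>x. r x \<in> RR"
    and r_meas: "r \<in> borel_measurable MX"
    and indep: "prob_space.indep_vars P
                  (\<lambda>_. MX \<Otimes>\<^sub>M count_space UNIV \<Otimes>\<^sub>M count_space UNIV)
                  (\<lambda>i \<omega>. (X i \<omega>, A i \<omega>, Y i \<omega>)) {1..n}"
    and ident: "\<And>i. i \<in> {1..n} \<Longrightarrow>
                  distr P (MX \<Otimes>\<^sub>M count_space UNIV \<Otimes>\<^sub>M count_space UNIV)
                    (\<lambda>\<omega>. (X i \<omega>, A i \<omega>, Y i \<omega>)) = F"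
    and posY: "measure F {t \<in> space F. snd (snd t)} > 0"
              "measure F {t \<in> space F. \<not> snd (snd t)} > 0"
    and posAY: "measure F {t \<in> space F. \<not> fst (snd t) \<and> snd (snd t)} > 0"
               "measure F {t \<in> space F. fst (snd t) \<and> snd (snd t)} > 0"
    and MLR: "\<And>\<rho> \<rho>'. \<rho> \<in> RR \<Longrightarrow> \<rho>' \<in> RR \<Longrightarrow> \<rho> > \<rho>' \<Longrightarrow>
                prob_R_given_Y F r \<rho> True * prob_R_given_Y F r \<rho>' False
                \<ge> prob_R_given_Y F r \<rho>' True * prob_R_given_Y F r \<rho> False"
    and \<epsilon>max: "\<epsilon>max \<ge> 0"
    and \<gamma>max: "\<gamma>max \<ge> 0"
  shows "(\<bar>fairness_gap P r X A Y n \<epsilon>max\<bar> \<le> \<gamma>max \<longrightarrow>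
            is_arg_max (accuracy P r X Y n)
              (\<lambda>\<epsilon>. 0 \<le> \<epsilon> \<and> \<epsilon> \<le> \<epsilon>max \<and> \<bar>fairness_gap P r X A Y n \<epsilon>\<bar> \<le> \<gamma>max) \<epsilon>max)
       \<and> (\<bar>fairness_gap P r X A Y n \<epsilon>max\<bar> > \<gamma>max \<longrightarrow>
            (\<exists>\<epsilon>s. (0 \<le> \<epsilon>s \<and> \<epsilon>s \<le> \<epsilon>max \<and> \<bar>fairness_gap P r X A Y n \<epsilon>s\<bar> = \<gamma>max)
               \<and> (\<forall>\<epsilon>. 0 \<le> \<epsilon> \<and> \<epsilon> \<le> \<epsilon>max \<and> \<bar>fairness_gap P r X A Y n \<epsilon>\<bar> = \<gamma>max \<longrightarrow> \<epsilon> \<le> \<epsilon>s)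
               \<and> is_arg_max (accuracy P r X Y n)
                   (\<lambda>\<epsilon>. 0 \<le> \<epsilon> \<and> \<epsilon> \<le> \<epsilon>max \<and> \<bar>fairness_gap P r X A Y n \<epsilon>\<bar> \<le> \<gamma>max) \<epsilon>s))"
proof -
  interpret iid_selection P MX F X A Y r RR n
    using P n RR(1,3) r_meas indep ident by (intro iid_selection.intro iid_selection_axioms.intro)
  have "mono_on {0..\<epsilon>max} (accuracy P r X Y n)"
    using mono_accuracy[OF posY MLR] by (rule mono_imp_mono_on)
  moreover have "continuous_on {0..\<epsilon>max} (\<lambda>\<epsilon>. \<bar>fairness_gap P r X A Y n \<epsilon>\<bar>)"
    by (intro continuous_intros continuous_on_fairness_gap)
  moreover have "\<bar>fairness_gap P r X A Y n 0\<bar> \<le> \<gamma>max"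
    using fairness_gap_0[OF posAY] \<gamma>max by simp
  ultimately show ?thesis
    using \<epsilon>max by (rule constrained_arg_max_of_mono)
qed

end
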